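(* Let $h$ be a positive function and $v$ a solution of $\ddot v=\frac{2}{h^2}(e^v-1)$. If $v$ has a minimum at $m$, then $v(m)\ge0$; if $v$ has a maximum at $M$, then $v(M)\le0$. Moreover, if $v$ satisfies the initial conditions $v(\delta)<0$, $\dot v(\delta)<0$ (resp. $v(\delta)>0$, $\dot v(\delta)>0$), then $v<0$ (resp. $v>0$) on $(\delta,\infty)$.
   Context: Here $v$ is a real function of $r$ (defined on $[\delta,\infty)$ for the second statement) and dots denote derivatives in $r$; minima and maxima are taken at interior points where $\dot v=0$. *)

theory Defs
  imports "HOL-Analysis.Analysis"
begin

end

theory Submission
  imports Defs
begin

text \<open>The right-hand side \<open>2/h\<^sup>2 (e\<^sup>v - 1)\<close> has the sign of \<open>v\<close>, so \<open>v\<close> is convex where it is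
  positive and concave where it is negative. Hence \<open>v < 0\<close> at a critical point would make it a
  strict local maximum, and \<open>v > 0\<close> a strict local minimum. On a half-line, once \<open>v\<close> and \<open>v'\<close> are
  both negative, \<open>v'\<close> keeps decreasing as long as \<open>v < 0\<close>, so \<open>v\<close> can never climb back to \<open>0\<close>.
  The positive cases follow by applying the negative ones to \<open>-v\<close>.\<close>

lemma real_mvt_within:
  fixes f :: "real \<Rightarrow> real"
  assumes "a < b" "{a..b} \<subseteq> S"
    and "\<And>x. a \<le> x \<Longrightarrow> x \<le> b \<Longrightarrow> (f has_real_derivative f' x) (at x within S)"
  shows "\<exists>z\<in>{a<..<b}. f b - f a = f' z * (b - a)"
proof -
  have "(f has_derivative (\<lambda>t. f' x * t)) (at x within {a..b})" if "a \<le> x" "x \<le> b" for x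
    using has_field_derivative_subset[OF assms(3)[OF that] assms(2)]
    by (simp add: has_field_derivative_def)
  from mvt_simple[OF \<open>a < b\<close> this] show ?thesis by auto
qed

lemma scaled_exp_minus_one_less_zero_iff:
  "c > 0 \<Longrightarrow> c * (exp x - 1) < 0 \<longleftrightarrow> x < (0::real)"
  by (simp add: mult_less_0_iff)

lemma scaled_exp_minus_one_greater_zero_iff:
  "c > 0 \<Longrightarrow> c * (exp x - 1) > 0 \<longleftrightarrow> x > (0::real)"
  by (simp add: zero_less_mult_iff)

lemma local_min_imp_second_derivative_nonneg:
  fixes v :: "real \<Rightarrow> real"
  assumes "open U" "m \<in> U"
    and v_deriv: "\<And>r. r \<in> U \<Longrightarrow> (v has_real_derivative v' r) (at r)"
    and v'_deriv: "(v' has_real_derivative v'') (at m)"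
    and "v' m = 0"
    and "e > 0" and min: "\<And>x. x \<in> U \<Longrightarrow> dist x m < e \<Longrightarrow> v m \<le> v x"
  shows "v'' \<ge> 0"
proof (rule ccontr)
  assume "\<not> v'' \<ge> 0"
  then obtain d where "d > 0" and v'_neg: "\<And>k. 0 < k \<Longrightarrow> k < d \<Longrightarrow> v' (m + k) < 0"
    using DERIV_neg_dec_right[OF v'_deriv] \<open>v' m = 0\<close> by force
  obtain \<rho> where "\<rho> > 0" "ball m \<rho> \<subseteq> U"
    using \<open>open U\<close> \<open>m \<in> U\<close> open_contains_ball by blast
  define k where "k = min d (min e \<rho>) / 2"
  have "0 < k" "k < d" "k < e" "k < \<rho>"
    using \<open>d > 0\<close> \<open>e > 0\<close> \<open>\<rho> > 0\<close> by (auto simp: k_def)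
  have "{m..m + k} \<subseteq> U"
    using \<open>k < \<rho>\<close> \<open>ball m \<rho> \<subseteq> U\<close> by (auto simp: dist_real_def)
  then obtain z where z: "z \<in> {m<..<m + k}" "v (m + k) - v m = v' z * k"
    using real_mvt_within[of m "m + k" UNIV v v'] \<open>0 < k\<close> v_deriv by force
  have "v' z < 0"
    using v'_neg[of "z - m"] z \<open>k < d\<close> by auto
  then have "v (m + k) < v m"
    using z mult_neg_pos[of "v' z" k] \<open>0 < k\<close> by simp
  moreover have "m + k \<in> U"
    using \<open>{m..m + k} \<subseteq> U\<close> \<open>0 < k\<close> by auto
  then have "v m \<le> v (m + k)"
    using min \<open>0 < k\<close> \<open>k < e\<close> by (simp add: dist_real_def)
  ultimately show False by simp
qed

lemma negative_barrier_on_halfline: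
  fixes v :: "real \<Rightarrow> real"
  assumes v_deriv: "\<And>r. r \<ge> \<delta> \<Longrightarrow> (v has_real_derivative v' r) (at r within {\<delta>..})"
    and v'_deriv: "\<And>r. r \<ge> \<delta> \<Longrightarrow> (v' has_real_derivative v'' r) (at r within {\<delta>..})"
    and concave_where_neg: "\<And>r. r \<ge> \<delta> \<Longrightarrow> v r < 0 \<Longrightarrow> v'' r < 0"
    and "v \<delta> < 0" "v' \<delta> < 0"
    and "r > \<delta>"
  shows "v r < 0"
proof (rule ccontr)
  assume "\<not> v r < 0"
  define S where "S = {\<delta>..r} \<inter> v -` {0..}"
  have "continuous_on {\<delta>..} v"
    using v_deriv by (auto simp: continuous_on_eq_continuous_within intro: DERIV_continuous)
  then have "continuous_on {\<delta>..r} v"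
    by (rule continuous_on_subset) auto
  then have "closed S"
    unfolding S_def by (rule continuous_closed_preimage) auto
  moreover have "r \<in> S" "bdd_below S"
    using \<open>\<not> v r < 0\<close> \<open>r > \<delta>\<close> unfolding S_def by (auto intro: bdd_belowI[of _ \<delta>])
  ultimately have "Inf S \<in> S"
    using closed_contains_Inf by blast
  define t where "t = Inf S"
  have "v t \<ge> 0" "\<delta> \<le> t"
    using \<open>Inf S \<in> S\<close> by (auto simp: S_def t_def)
  have neg_before_t: "v x < 0" if "\<delta> \<le> x" "x < t" for x
  proof (rule ccontr)
    assume "\<not> v x < 0"
    with that \<open>Inf S \<in> S\<close> have "x \<in> S" by (auto simp: S_def t_def)
    then show False
      using cInf_lower[OF _ \<open>bdd_below S\<close>] that by (fastforce simp: t_def)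
  qed
  have "\<delta> < t"
    using \<open>v t \<ge> 0\<close> \<open>\<delta> \<le> t\<close> \<open>v \<delta> < 0\<close> by (cases "t = \<delta>") auto
  obtain z where z: "z \<in> {\<delta><..<t}" "v t - v \<delta> = v' z * (t - \<delta>)"
    using real_mvt_within[of \<delta> t "{\<delta>..}" v v'] \<open>\<delta> < t\<close> v_deriv by force
  obtain w where w: "w \<in> {\<delta><..<z}" "v' z - v' \<delta> = v'' w * (z - \<delta>)"
    using real_mvt_within[of \<delta> z "{\<delta>..}" v' v''] z v'_deriv by force
  have "v'' w < 0"
    using concave_where_neg neg_before_t w z by auto
  then have "v' z < 0"
    using w \<open>v' \<delta> < 0\<close> by (smt (verit) greaterThanLessThan_iff mult_neg_pos)
  then have "v t < v \<delta>"
    using z mult_neg_pos[of "v' z" "t - \<delta>"] \<open>\<delta> < t\<close> by simp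
  then show False
    using \<open>v t \<ge> 0\<close> \<open>v \<delta> < 0\<close> by simp
qed

theorem mainTheorem13:
  fixes h :: "real \<Rightarrow> real"
  assumes hpos: "\<And>r. h r > 0"
  shows
   "(\<forall>(U::real set) (v::real\<Rightarrow>real) v' v'' m.
        open U \<and>
        (\<forall>r\<in>U. (v has_real_derivative v' r) (at r) \<and>
                (v' has_real_derivative v'' r) (at r) \<and>
                v'' r = 2 / (h r)^2 * (exp (v r) - 1)) \<and>
        m \<in> U \<and> v' m = 0 \<and>
        (\<exists>e>0. \<forall>x\<in>U. dist x m < e \<longrightarrow> v m \<le> v x)
        \<longrightarrow> v m \<ge> 0)
  \<and> (\<forall>(U::real set) (v::real\<Rightarrow>real) v' v'' M.
        open U \<and>
        (\<forall>r\<in>U. (v has_real_derivative v' r) (at r) \<and>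
                (v' has_real_derivative v'' r) (at r) \<and>
                v'' r = 2 / (h r)^2 * (exp (v r) - 1)) \<and>
        M \<in> U \<and> v' M = 0 \<and>
        (\<exists>e>0. \<forall>x\<in>U. dist x M < e \<longrightarrow> v x \<le> v M)
        \<longrightarrow> v M \<le> 0)
  \<and> (\<forall>(\<delta>::real) (v::real\<Rightarrow>real) v' v''.
        (\<forall>r\<ge>\<delta>. (v has_real_derivative v' r) (at r within {\<delta>..}) \<and>
                (v' has_real_derivative v'' r) (at r within {\<delta>..}) \<and>
                v'' r = 2 / (h r)^2 * (exp (v r) - 1))
        \<longrightarrow> ((v \<delta> < 0 \<and> v' \<delta> < 0 \<longrightarrow> (\<forall>r>\<delta>. v r < 0)) \<and>
             (v \<delta> > 0 \<and> v' \<delta> > 0 \<longrightarrow> (\<forall>r>\<delta>. v r > 0))))"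
proof -
  have coeff_pos: "2 / (h r)^2 > 0" for r
    using hpos[of r] by simp
  note neg_iff = scaled_exp_minus_one_less_zero_iff[OF coeff_pos]
  note pos_iff = scaled_exp_minus_one_greater_zero_iff[OF coeff_pos]
  show ?thesis
  proof (intro conjI allI impI; elim conjE exE)
    fix U v v' v'' m e
    assume "open U" "\<forall>r\<in>U. (v has_real_derivative v' r) (at r) \<and>
        (v' has_real_derivative v'' r) (at r) \<and> v'' r = 2 / (h r)^2 * (exp (v r) - 1)"
      "m \<in> U" "v' m = 0" "e > 0" "\<forall>x\<in>U. dist x m < e \<longrightarrow> v m \<le> v x"
    then show "v m \<ge> 0"
      using local_min_imp_second_derivative_nonneg[of U m v v' "v'' m" e] neg_iff
      by (smt (verit))
  next
    fix U v v' v'' M e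
    assume "open U" and ode: "\<forall>r\<in>U. (v has_real_derivative v' r) (at r) \<and>
        (v' has_real_derivative v'' r) (at r) \<and> v'' r = 2 / (h r)^2 * (exp (v r) - 1)"
      and "M \<in> U" "v' M = 0" "e > 0" "\<forall>x\<in>U. dist x M < e \<longrightarrow> v x \<le> v M"
    moreover have "\<forall>r\<in>U. ((\<lambda>x. - v x) has_real_derivative - v' r) (at r) \<and>
        ((\<lambda>x. - v' x) has_real_derivative - v'' r) (at r)"
      using ode by (blast intro: DERIV_minus)
    ultimately show "v M \<le> 0"
      using local_min_imp_second_derivative_nonneg[of U M "\<lambda>x. - v x" "\<lambda>x. - v' x" "- v'' M" e]
        pos_iff by (smt (verit))
  next
    fix \<delta> v v' v'' r
    assume ode: "\<forall>r\<ge>\<delta>. (v has_real_derivative v' r) (at r within {\<delta>..}) \<and>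
        (v' has_real_derivative v'' r) (at r within {\<delta>..}) \<and> v'' r = 2 / (h r)^2 * (exp (v r) - 1)"
      and "v \<delta> < 0" "v' \<delta> < 0" "r > \<delta>"
    moreover have "v'' r < 0" if "r \<ge> \<delta>" "v r < 0" for r
      using ode neg_iff that by simp
    ultimately show "v r < 0"
      using negative_barrier_on_halfline[of \<delta> v v' v''] by blast
  next
    fix \<delta> v v' v'' r
    assume ode: "\<forall>r\<ge>\<delta>. (v has_real_derivative v' r) (at r within {\<delta>..}) \<and>
        (v' has_real_derivative v'' r) (at r within {\<delta>..}) \<and> v'' r = 2 / (h r)^2 * (exp (v r) - 1)"
      and "v \<delta> > 0" "v' \<delta> > 0" "r > \<delta>"
    moreover have "\<forall>r\<ge>\<delta>. ((\<lambda>x. - v x) has_real_derivative - v' r) (at r within {\<delta>..}) \<and>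
        ((\<lambda>x. - v' x) has_real_derivative - v'' r) (at r within {\<delta>..})"
      using ode by (blast intro: DERIV_minus)
    moreover have "- v'' r < 0" if "r \<ge> \<delta>" "- v r < 0" for r
      using ode pos_iff that by simp
    ultimately have "- v r < 0"
      using negative_barrier_on_halfline[of \<delta> "\<lambda>x. - v x" "\<lambda>x. - v' x" "\<lambda>x. - v'' x"] by simp
    then show "v r > 0" by simp
  qed
qed

end
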